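(* Let $\sigma$ be a super filling of $\mathrm{dg}(\lambda)$ (order $<_2$) and let $j$ be such that $\lambda_j=\lambda_{j+1}$. Then $\mathrm{maj}(\tau_j(\sigma))=\mathrm{maj}(\sigma)$.
   Context: Let $\lambda=(\lambda_1\ge\dots\ge\lambda_k>0)$ be a partition; $\mathrm{dg}(\lambda)=\{(r,i):1\le i\le k,1\le r\le\lambda_i\}$, $(r,i)$ being row $r$ from the bottom and column $i$ from the left (columns bottom-justified of heights $\lambda_i$); $\mathrm{leg}((r,i))=\lambda_i-r$. $\mathcal A=\{1,\bar1,2,\bar2,\dots\}$ consists of positive letters $i$ and negative letters $\bar i$, totally ordered by $<_2$: $0<1<2<3<\cdots<\bar3<\bar2<\bar1$. $I(a,b)=1$ if $a>b$ or $a=b$ is negative, and $I(a,b)=0$ if $a<b$ or $a=b$ is positive. A super filling is $\sigma:\mathrm{dg}(\lambda)\to\mathcal A$; a cell $u=(r,i)$, $r>1$, is a descent if $I(\sigma(u),\sigma((r-1,i)))=1$, and $\mathrm{maj}(\sigma)=\sum_{\text{descents }u}(\mathrm{leg}(u)+1)$. For letters $(a,b,c)$ (with $a$ possibly $0$) say $(a,b,c)$ is quinv if exactly one of $I(a,b)=1$, $I(c,b)=0$, $I(a,c)=0$ holds. The operator $\tau_j$ (for $\lambda_j=\lambda_{j+1}=k'$): write $a_r=\sigma((r,j))$, $b_r=\sigma((r,j+1))$. Let $r_{\max}$ be the largest $r\in\{2,\dots,k'\}$ such that $(a_r,a_{r-1},b_{r-1})$ and $(b_r,a_{r-1},b_{r-1})$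 are either both quinv or both not quinv; if no such $r$ exists, $r_{\max}=1$. Then $\tau_j(\sigma)$ is obtained from $\sigma$ by exchanging the entries of cells $(i,j)$ and $(i,j+1)$ for every $i$ with $r_{\max}\le i\le k'$, all other entries unchanged. *)

theory Defs
  imports Main
begin

text \<open>Letters: Zero is the auxiliary letter 0; Pos i is the positive letter i, Neg i is the
negative letter bar i (i >= 1 for genuine letters of the super alphabet A).\<close>
datatype letter = Zero | Pos nat | Neg nat

definition in_alphabet :: "letter \<Rightarrow> bool" where
  "in_alphabet x \<longleftrightarrow> (\<exists>i\<ge>1. x = Pos i \<or> x = Neg i)"

fun less2 :: "letter \<Rightarrow> letter \<Rightarrow> bool" where
  "less2 Zero y = (y \<noteq> Zero)"
| "less2 (Pos m) Zero = False"
| "less2 (Pos m) (Pos n) = (m < n)"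
| "less2 (Pos m) (Neg n) = True"
| "less2 (Neg m) (Neg n) = (n < m)"
| "less2 (Neg m) Zero = False"
| "less2 (Neg m) (Pos n) = False"

fun is_neg :: "letter \<Rightarrow> bool" where
  "is_neg (Neg _) = True"
| "is_neg _ = False"

definition Ind :: "letter \<Rightarrow> letter \<Rightarrow> bool" where
  "Ind a b \<longleftrightarrow> less2 b a \<or> (a = b \<and> is_neg a)"

definition quinv :: "letter \<Rightarrow> letter \<Rightarrow> letter \<Rightarrow> bool" where
  "quinv a b c \<longleftrightarrow>
     length (filter id [Ind a b, \<not> Ind c b, \<not> Ind a c]) = 1"

text \<open>A partition is a list lam = [lam_1, ..., lam_k], weakly decreasing, all parts positive.
Column i (1-based) has height lam ! (i - 1).\<close>
definition is_partition :: "nat list \<Rightarrow> bool" where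
  "is_partition lam \<longleftrightarrow> sorted_wrt (\<ge>) lam \<and> (\<forall>x\<in>set lam. x > 0)"

definition col :: "nat list \<Rightarrow> nat \<Rightarrow> nat" where
  "col lam i = lam ! (i - 1)"

text \<open>Cells are pairs (r, i): row r from the bottom, column i from the left.\<close>
definition dg :: "nat list \<Rightarrow> (nat \<times> nat) set" where
  "dg lam = {(r, i). 1 \<le> i \<and> i \<le> length lam \<and> 1 \<le> r \<and> r \<le> col lam i}"

definition leg :: "nat list \<Rightarrow> nat \<times> nat \<Rightarrow> nat" where
  "leg lam u = col lam (snd u) - fst u"

definition super_filling :: "nat list \<Rightarrow> (nat \<times> nat \<Rightarrow> letter) \<Rightarrow> bool" where
  "super_filling lam \<sigma> \<longleftrightarrow> (\<forall>u\<in>dg lam. in_alphabet (\<sigma> u))"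

definition is_descent :: "nat list \<Rightarrow> (nat \<times> nat \<Rightarrow> letter) \<Rightarrow> nat \<times> nat \<Rightarrow> bool" where
  "is_descent lam \<sigma> u \<longleftrightarrow> u \<in> dg lam \<and> fst u > 1 \<and> Ind (\<sigma> u) (\<sigma> (fst u - 1, snd u))"

definition maj :: "nat list \<Rightarrow> (nat \<times> nat \<Rightarrow> letter) \<Rightarrow> nat" where
  "maj lam \<sigma> = (\<Sum>u\<in>{u\<in>dg lam. is_descent lam \<sigma> u}. leg lam u + 1)"

definition r_max :: "nat list \<Rightarrow> nat \<Rightarrow> (nat \<times> nat \<Rightarrow> letter) \<Rightarrow> nat" where
  "r_max lam j \<sigma> =
     (let k' = col lam j;
          a = (\<lambda>r. \<sigma> (r, j)); b = (\<lambda>r. \<sigma> (r, j + 1));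
          S = {r. 2 \<le> r \<and> r \<le> k' \<and>
                  (quinv (a r) (a (r - 1)) (b (r - 1)) \<longleftrightarrow> quinv (b r) (a (r - 1)) (b (r - 1)))}
      in if S = {} then 1 else Max S)"

definition tau :: "nat list \<Rightarrow> nat \<Rightarrow> (nat \<times> nat \<Rightarrow> letter) \<Rightarrow> (nat \<times> nat \<Rightarrow> letter)" where
  "tau lam j \<sigma> = (\<lambda>(r, i).
     if r_max lam j \<sigma> \<le> r \<and> r \<le> col lam j then
       (if i = j then \<sigma> (r, j + 1) else if i = j + 1 then \<sigma> (r, j) else \<sigma> (r, i))
     else \<sigma> (r, i))"

end

theory Submission imports Defs begin

text \<open>Because the columns j and j + 1 have equal height, cells in the same row of
the two columns have the same leg, so maj only depends on how many of the two cells of each row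
are descents. Above r_max whole row pairs are swapped, below it nothing changes, so only the
row r_max needs an argument: there the quinv condition forces
I(x,a) + I(y,b) = I(y,a) + I(x,b) for the entries x, y of row r_max and a, b of the row below.\<close>

lemma Ind_trans: "Ind z b \<Longrightarrow> Ind b a \<Longrightarrow> Ind z a"
  by (cases a; cases b; cases z) (auto simp: Ind_def)

lemma Ind_trans_not: "Ind z a \<Longrightarrow> \<not> Ind b a \<Longrightarrow> Ind z b"
  by (cases a; cases b; cases z) (auto simp: Ind_def)

lemma quinv_iff_Ind:
  "quinv z a b \<longleftrightarrow> (if Ind b a then Ind z a = Ind z b else Ind z a \<noteq> Ind z b)"
  using Ind_trans[of z b a] Ind_trans_not[of z a b]
  by (cases "Ind z a"; cases "Ind b a"; cases "Ind z b") (auto simp: quinv_def)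

lemma Ind_exchange:
  assumes "quinv x a b \<longleftrightarrow> quinv y a b"
  shows "of_bool (Ind x a) + of_bool (Ind y b) = of_bool (Ind y a) + (of_bool (Ind x b) :: nat)"
  using assms Ind_trans[of x b a] Ind_trans[of y b a] Ind_trans_not[of x a b] Ind_trans_not[of y a b]
  unfolding quinv_iff_Ind
  by (cases "Ind b a"; cases "Ind x a"; cases "Ind x b"; cases "Ind y a"; cases "Ind y b") auto

definition quinv_agree :: "(nat \<times> nat \<Rightarrow> letter) \<Rightarrow> nat \<Rightarrow> nat \<Rightarrow> bool" where
  "quinv_agree \<sigma> j r \<longleftrightarrow>
     (quinv (\<sigma> (r, j)) (\<sigma> (r - 1, j)) (\<sigma> (r - 1, j + 1))
      \<longleftrightarrow> quinv (\<sigma> (r, j + 1)) (\<sigma> (r - 1, j)) (\<sigma> (r - 1, j + 1)))"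

lemma r_max_quinv_agree:
  assumes "r_max lam j \<sigma> \<noteq> 1"
  shows "2 \<le> r_max lam j \<sigma> \<and> r_max lam j \<sigma> \<le> col lam j \<and> quinv_agree \<sigma> j (r_max lam j \<sigma>)"
proof -
  define S where "S = {r. 2 \<le> r \<and> r \<le> col lam j \<and> quinv_agree \<sigma> j r}"
  have r_max_S: "r_max lam j \<sigma> = (if S = {} then 1 else Max S)"
    unfolding r_max_def S_def quinv_agree_def Let_def by simp
  with assms have "S \<noteq> {}" and "r_max lam j \<sigma> = Max S"
    by (auto split: if_splits)
  moreover have "finite S"
    unfolding S_def by (rule finite_subset[of _ "{..col lam j}"]) auto
  ultimately have "r_max lam j \<sigma> \<in> S"
    using Max_in by simp
  then show ?thesis
    unfolding S_def by simp
qed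

definition pair_descents :: "(nat \<times> nat \<Rightarrow> letter) \<Rightarrow> nat \<Rightarrow> nat \<Rightarrow> nat" where
  "pair_descents \<sigma> j r =
     of_bool (Ind (\<sigma> (r, j)) (\<sigma> (r - 1, j))) + of_bool (Ind (\<sigma> (r, j + 1)) (\<sigma> (r - 1, j + 1)))"

lemma tau_pair_descents:
  assumes "2 \<le> r" "r \<le> col lam j"
  shows "pair_descents (tau lam j \<sigma>) j r = pair_descents \<sigma> j r"
proof -
  define m where "m = r_max lam j \<sigma>"
  have tau_apply: "tau lam j \<sigma> (r', i) =
      (if m \<le> r' \<and> r' \<le> col lam j then
         (if i = j then \<sigma> (r', j + 1) else if i = j + 1 then \<sigma> (r', j) else \<sigma> (r', i))
       else \<sigma> (r', i))" for r' i
    unfolding tau_def m_def by simp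
  consider "m < r" | "r < m" | "r = m"
    by linarith
  then show ?thesis
  proof cases
    case 1
    with assms have "tau lam j \<sigma> (r, j) = \<sigma> (r, j + 1)" "tau lam j \<sigma> (r, j + 1) = \<sigma> (r, j)"
      "tau lam j \<sigma> (r - 1, j) = \<sigma> (r - 1, j + 1)" "tau lam j \<sigma> (r - 1, j + 1) = \<sigma> (r - 1, j)"
      by (auto simp: tau_apply)
    then show ?thesis
      by (simp add: pair_descents_def)
  next
    case 2
    then have "\<not> m \<le> r - 1"
      by simp
    with 2 assms show ?thesis
      by (simp add: pair_descents_def tau_apply)
  next
    case 3
    with assms have "quinv_agree \<sigma> j r"
      using r_max_quinv_agree[of lam j \<sigma>] unfolding m_def by auto
    then show ?thesis
      using 3 assms Ind_exchange
      by (simp add: pair_descents_def tau_apply quinv_agree_def)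
  qed
qed

lemma finite_dg: "finite (dg lam)"
proof -
  have "dg lam \<subseteq> (\<Union>i\<in>{1..length lam}. {1..col lam i} \<times> {i})"
    unfolding dg_def by auto
  then show ?thesis
    by (rule finite_subset) auto
qed

lemma maj_eq_sum_dg:
  "maj lam \<sigma> = (\<Sum>u\<in>dg lam. if is_descent lam \<sigma> u then leg lam u + 1 else 0)"
  unfolding maj_def by (rule sum.inter_filter[OF finite_dg])

lemma maj_eq_if_pair_descents_eq:
  assumes "1 \<le> j" "j + 1 \<le> length lam" and heights: "col lam j = col lam (j + 1)"
    and other_columns: "\<And>r i. i \<noteq> j \<Longrightarrow> i \<noteq> j + 1 \<Longrightarrow> \<rho> (r, i) = \<sigma> (r, i)"
    and rows: "\<And>r. 2 \<le> r \<Longrightarrow> r \<le> col lam j \<Longrightarrow> pair_descents \<rho> j r = pair_descents \<sigma> j r"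
  shows "maj lam \<rho> = maj lam \<sigma>"
proof -
  define k where "k = col lam j"
  define C where "C = {1..k} \<times> {j, j + 1}"
  define F where "F = (\<lambda>\<tau> u. if is_descent lam \<tau> u then leg lam u + 1 else 0)"
  have C_dg: "C \<subseteq> dg lam"
    unfolding C_def dg_def k_def using assms(1,2) heights by auto
  have maj_split: "maj lam \<tau> = sum (F \<tau>) (dg lam - C) + sum (F \<tau>) C" for \<tau>
    unfolding maj_eq_sum_dg F_def using sum.subset_diff[OF C_dg finite_dg] by blast
  have outside: "sum (F \<rho>) (dg lam - C) = sum (F \<sigma>) (dg lam - C)"
  proof (rule sum.cong[OF refl])
    fix u assume "u \<in> dg lam - C"
    moreover obtain r i where u: "u = (r, i)"
      by (cases u)
    ultimately have "i \<noteq> j" "i \<noteq> j + 1"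
      using heights unfolding C_def dg_def k_def by auto
    then show "F \<rho> u = F \<sigma> u"
      unfolding F_def is_descent_def u by (simp add: other_columns)
  qed
  have F_column: "F \<tau> (r, i) = (k - r + 1) *
      of_bool (2 \<le> r \<and> Ind (\<tau> (r, i)) (\<tau> (r - 1, i)))"
    if "r \<in> {1..k}" "i \<in> {j, j + 1}" for \<tau> r i
  proof -
    have "(r, i) \<in> dg lam"
      using C_dg that unfolding C_def by auto
    moreover have "leg lam (r, i) = k - r"
      using that heights unfolding leg_def k_def by auto
    ultimately show ?thesis
      unfolding F_def is_descent_def by auto
  qed
  have inside: "sum (F \<tau>) C = (\<Sum>r\<in>{1..k}. (k - r + 1) * of_bool (2 \<le> r) * pair_descents \<tau> j r)"
    for \<tau>
  proof -
    have "sum (F \<tau>) C = (\<Sum>r\<in>{1..k}. F \<tau> (r, j) + F \<tau> (r, j + 1))"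
      unfolding C_def by (simp add: sum.cartesian_product')
    also have "\<dots> = (\<Sum>r\<in>{1..k}. (k - r + 1) * of_bool (2 \<le> r) * pair_descents \<tau> j r)"
      by (rule sum.cong[OF refl]) (auto simp: F_column pair_descents_def distrib_left)
    finally show ?thesis .
  qed
  have "sum (F \<rho>) C = sum (F \<sigma>) C"
    unfolding inside by (rule sum.cong[OF refl]) (auto simp: rows k_def)
  then show ?thesis
    using maj_split[of \<rho>] maj_split[of \<sigma>] outside by simp
qed

theorem mainTheorem13:
  fixes lam :: "nat list" and j :: nat and \<sigma> :: "nat \<times> nat \<Rightarrow> letter"
  assumes "is_partition lam"
    and "super_filling lam \<sigma>"
    and "1 \<le> j" and "j + 1 \<le> length lam"
    and "col lam j = col lam (j + 1)"
  shows "maj lam (tau lam j \<sigma>) = maj lam \<sigma>"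
proof (rule maj_eq_if_pair_descents_eq[OF assms(3-5)])
  show "tau lam j \<sigma> (r, i) = \<sigma> (r, i)" if "i \<noteq> j" "i \<noteq> j + 1" for r i
    using that by (simp add: tau_def)
  show "pair_descents (tau lam j \<sigma>) j r = pair_descents \<sigma> j r" if "2 \<le> r" "r \<le> col lam j" for r
    using that by (rule tau_pair_descents)
qed

end
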